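(* Let $C_n=[U_n,[U_{n-1},\dots,[U_2,U_1]\dots]]$ be any grade-$n$ nested commutator in which each $U_j$ is either $h\partial_x^2$ or $h^{-1}V(x)$ (with $V$ smooth). Let $O_q=y_q(x)h^q\partial_x^q$ be an observable with $y_q$ smooth, so that $\mathrm{ht}(O_q)=\mathrm{wd}(O_q)=q$. Then $$\mathrm{ht}([C_n,O_q])\le\mathrm{wd}([C_n,O_q]).$$
   Context: $\mathcal{L}_h$ is the set of differential operators $\sum_{k=0}^n y_k(x)h^{m_k}\partial_x^{d_k}$ ($n,d_k\in\mathbb{N}$, $m_k\in\mathbb{Z}$, $y_k$ smooth). For $P\in\mathcal{L}_h$: $\mathrm{ht}(P)=\max\{d: h^m\partial_x^d\text{ appears in }P\}$, $\mathrm{wd}(P)=\min\{m: h^m\partial_x^d\text{ appears in }P\}$, with $\mathrm{ht}(0)=0$, $\mathrm{wd}(0)=\infty$. *)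

theory Defs
  imports "HOL-Analysis.Analysis"
begin

definition smooth :: "(real \<Rightarrow> real) \<Rightarrow> bool" where
  "smooth f \<longleftrightarrow> (\<forall>k x. ((deriv ^^ k) f) differentiable (at x))"

text \<open>An operator in L_h is a finite sum of terms y(x) h^m d_x^d, represented as a list of
  triples (y, m, d). h is a formal (commuting) parameter.\<close>
type_synonym hterm = "(real \<Rightarrow> real) \<times> int \<times> nat"
type_synonym hop = "hterm list"

definition hcoeff :: "hop \<Rightarrow> int \<Rightarrow> nat \<Rightarrow> real \<Rightarrow> real" where
  "hcoeff P m d = (\<lambda>x. sum_list (map (\<lambda>(y, m', d'). if m' = m \<and> d' = d then y x else 0) P))"

definition appears :: "hop \<Rightarrow> int \<Rightarrow> nat \<Rightarrow> bool" where
  "appears P m d \<longleftrightarrow> hcoeff P m d \<noteq> (\<lambda>x. 0)"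

definition ht :: "hop \<Rightarrow> nat" where
  "ht P = (if \<exists>m d. appears P m d then Max {d. \<exists>m. appears P m d} else 0)"

definition wd :: "hop \<Rightarrow> ereal" where
  "wd P = (if \<exists>m d. appears P m d then ereal (of_int (Min {m. \<exists>d. appears P m d})) else \<infinity>)"

text \<open>Composition via the Leibniz rule:
  a h^m1 d^d1 o b h^m2 d^d2 = sum_j (d1 choose j) a b^(j) h^(m1+m2) d^(d1-j+d2).\<close>
definition term_comp :: "hterm \<Rightarrow> hterm \<Rightarrow> hop" where
  "term_comp s t = (case s of (a, m1, d1) \<Rightarrow> case t of (b, m2, d2) \<Rightarrow>
     map (\<lambda>j. (\<lambda>x. of_nat (d1 choose j) * a x * (deriv ^^ j) b x, m1 + m2, d1 - j + d2)) [0..<Suc d1])"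

definition op_comp :: "hop \<Rightarrow> hop \<Rightarrow> hop" where
  "op_comp P Q = concat [term_comp s t. s \<leftarrow> P, t \<leftarrow> Q]"

definition op_neg :: "hop \<Rightarrow> hop" where
  "op_neg P = map (\<lambda>(a, m, d). (\<lambda>x. - a x, m, d)) P"

definition comm :: "hop \<Rightarrow> hop \<Rightarrow> hop" where
  "comm P Q = op_comp P Q @ op_neg (op_comp Q P)"

definition gen :: "(real \<Rightarrow> real) \<Rightarrow> bool \<Rightarrow> hop" where
  "gen V b = (if b then [(\<lambda>x. 1, 1, 2)] else [(V, -1, 0)])"

text \<open>Nested commutator [U_n,[U_{n-1},...,[U_2,U_1]...]] for the list [U_n,...,U_1].\<close>
fun nested :: "(real \<Rightarrow> real) \<Rightarrow> bool list \<Rightarrow> hop" where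
  "nested V [] = []"
| "nested V [b] = gen V b"
| "nested V (b # bs) = comm (gen V b) (nested V bs)"

definition obs :: "(real \<Rightarrow> real) \<Rightarrow> nat \<Rightarrow> hop" where
  "obs y q = [(y, int q, q)]"

end

(* Every nested commutator C of the generators h d^2 and h^-1 V is homogeneous in h, of some
   degree k, and has differential order at most k + 1: each generator a h^m d^p has p = m + 1, and
   commuting with a monomial a h^m d^p raises the order by at most p - 1, since the top-order terms
   of the two products are a c and c a and cancel.  Hence [C, y h^q d^q] is homogeneous of degree
   k + q and of order at most k + q, which is ht <= wd. *)

theory Submission
  imports Defs "HOL-Complex_Analysis.Cauchy_Integral_Formula"
begin

section \<open>Smooth functions\<close>

lemma higher_deriv_Suc: "(deriv ^^ Suc k) f = (deriv ^^ k) (deriv f)"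
  by (simp only: funpow_Suc_right o_def)

lemma smooth_iff_deriv:
  "smooth f \<longleftrightarrow> (\<forall>x. f differentiable (at x)) \<and> smooth (deriv f)"
proof
  assume "smooth f"
  then show "(\<forall>x. f differentiable (at x)) \<and> smooth (deriv f)"
    unfolding smooth_def by (metis funpow_0 higher_deriv_Suc)
next
  assume *: "(\<forall>x. f differentiable (at x)) \<and> smooth (deriv f)"
  show "smooth f"
    unfolding smooth_def
  proof (intro allI)
    fix k x
    show "(deriv ^^ k) f differentiable (at x)"
      using * by (cases k) (simp_all only: smooth_def funpow_0 higher_deriv_Suc)
  qed
qed

lemma smooth_differentiable: "smooth f \<Longrightarrow> f differentiable (at x)"
  using smooth_iff_deriv by blast

lemma smooth_field_differentiable: "smooth f \<Longrightarrow> f field_differentiable (at x)"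
  using smooth_differentiable[of f x] by (simp add: field_differentiable_def real_differentiable_def)

lemma smooth_deriv: "smooth f \<Longrightarrow> smooth (deriv f)"
  using smooth_iff_deriv by blast

lemma smooth_higher_deriv: "smooth f \<Longrightarrow> smooth ((deriv ^^ j) f)"
  by (induction j) (auto intro: smooth_deriv)

lemma smooth_const: "smooth (\<lambda>x. c)"
  by (simp add: smooth_def)

lemma higher_deriv_add_real:
  fixes f g :: "real \<Rightarrow> real"
  assumes "\<forall>i<k. \<forall>x. (deriv ^^ i) f differentiable (at x)"
    and "\<forall>i<k. \<forall>x. (deriv ^^ i) g differentiable (at x)"
  shows "(deriv ^^ k) (\<lambda>x. f x + g x) = (\<lambda>x. (deriv ^^ k) f x + (deriv ^^ k) g x)"
  using assms
proof (induction k arbitrary: f g)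
  case (Suc k)
  have "deriv (\<lambda>x. f x + g x) = (\<lambda>x. deriv f x + deriv g x)"
    using Suc.prems[rule_format, of 0]
    by (intro ext deriv_add) (auto simp: real_differentiable_def field_differentiable_def)
  moreover have "\<forall>i<k. \<forall>x. (deriv ^^ i) (deriv f) differentiable (at x)"
    and "\<forall>i<k. \<forall>x. (deriv ^^ i) (deriv g) differentiable (at x)"
    using Suc.prems by (auto simp flip: higher_deriv_Suc)
  ultimately show ?case
    using Suc.IH by (simp only: higher_deriv_Suc)
qed simp

lemma higher_deriv_add_smooth:
  "smooth f \<Longrightarrow> smooth g \<Longrightarrow> (deriv ^^ k) (\<lambda>x. f x + g x) = (\<lambda>x. (deriv ^^ k) f x + (deriv ^^ k) g x)"
  by (rule higher_deriv_add_real) (simp_all add: smooth_def)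

lemma smooth_add: "smooth f \<Longrightarrow> smooth g \<Longrightarrow> smooth (\<lambda>x. f x + g x)"
  unfolding smooth_def by (simp add: higher_deriv_add_real differentiable_add)

lemma smooth_mult:
  assumes "smooth f" and "smooth g"
  shows "smooth (\<lambda>x. f x * g x)"
proof -
  have C_k: "\<forall>i\<le>k. \<forall>x. (deriv ^^ i) (\<lambda>x. f x * g x) differentiable (at x)"
    if "smooth f" "smooth g" for k and f g :: "real \<Rightarrow> real"
    using that
  proof (induction k arbitrary: f g)
    case 0
    then show ?case by (auto intro: differentiable_mult smooth_differentiable)
  next
    case (Suc k)
    have f': "smooth (deriv f)" and g': "smooth (deriv g)"
      using Suc.prems by (simp_all add: smooth_deriv)
    have IH1: "\<forall>i\<le>k. \<forall>x. (deriv ^^ i) (\<lambda>x. f x * deriv g x) differentiable (at x)"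
      using Suc.IH[OF Suc.prems(1) g'] .
    have IH2: "\<forall>i\<le>k. \<forall>x. (deriv ^^ i) (\<lambda>x. deriv f x * g x) differentiable (at x)"
      using Suc.IH[OF f' Suc.prems(2)] .
    have "deriv (\<lambda>x. f x * g x) = (\<lambda>x. f x * deriv g x + deriv f x * g x)"
      using Suc.prems by (intro ext) (simp add: smooth_field_differentiable)
    then have "(deriv ^^ Suc k) (\<lambda>x. f x * g x)
        = (deriv ^^ k) (\<lambda>x. f x * deriv g x + deriv f x * g x)"
      by (simp only: higher_deriv_Suc)
    also have "\<dots> = (\<lambda>x. (deriv ^^ k) (\<lambda>x. f x * deriv g x) x + (deriv ^^ k) (\<lambda>x. deriv f x * g x) x)"
      using IH1 IH2 by (intro higher_deriv_add_real) auto
    finally have expand: "(deriv ^^ Suc k) (\<lambda>x. f x * g x) = \<dots>" .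
    have top: "(deriv ^^ Suc k) (\<lambda>x. f x * g x) differentiable (at x)" for x
      unfolding expand using IH1 IH2 by (intro differentiable_add) auto
    show ?case
    proof (intro allI impI)
      fix i x assume "i \<le> Suc k"
      then consider "i \<le> k" | "i = Suc k" by linarith
      then show "(deriv ^^ i) (\<lambda>x. f x * g x) differentiable (at x)"
        using Suc.IH[OF Suc.prems] top by cases blast+
    qed
  qed
  show ?thesis
    unfolding smooth_def using C_k[OF assms] by (meson order_refl)
qed

lemma smooth_neg: "smooth f \<Longrightarrow> smooth (\<lambda>x. - f x)"
  using smooth_mult[OF smooth_const[of "-1"]] by simp

section \<open>Coefficients of compositions\<close>

lemma hcoeff_Nil [simp]: "hcoeff [] m d = (\<lambda>x. 0)"
  by (simp add: hcoeff_def)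

lemma hcoeff_Cons:
  "hcoeff ((a, m', d') # P) m d = (\<lambda>x. (if m' = m \<and> d' = d then a x else 0) + hcoeff P m d x)"
  by (simp add: hcoeff_def)

lemma hcoeff_append: "hcoeff (P @ Q) m d x = hcoeff P m d x + hcoeff Q m d x"
  by (simp add: hcoeff_def)

lemma hcoeff_op_neg: "hcoeff (op_neg P) m d x = - hcoeff P m d x"
  by (induction P) (auto simp: hcoeff_def op_neg_def)

lemma hcoeff_comm:
  "hcoeff (comm P Q) m d x = hcoeff (op_comp P Q) m d x - hcoeff (op_comp Q P) m d x"
  by (simp add: comm_def hcoeff_append hcoeff_op_neg)

lemma hcoeff_term_comp:
  "hcoeff (term_comp (a, m1, d1) (b, m2, d2)) m d x =
     (\<Sum>j\<le>d1. if m1 + m2 = m \<and> d1 - j + d2 = d then of_nat (d1 choose j) * a x * (deriv ^^ j) b x else 0)"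
  by (simp add: hcoeff_def term_comp_def interv_sum_list_conv_sum_set_nat atLeast0AtMost
      atLeastLessThanSuc_atLeastAtMost o_def del: upt_Suc)

lemma set_op_comp: "set (op_comp P Q) = (\<Union>s\<in>set P. \<Union>t\<in>set Q. set (term_comp s t))"
  by (auto simp: op_comp_def)

lemma set_term_comp:
  "set (term_comp (a, m1, d1) (b, m2, d2)) =
     (\<lambda>j. (\<lambda>x. of_nat (d1 choose j) * a x * (deriv ^^ j) b x, m1 + m2, d1 - j + d2)) ` {..d1}"
  by (simp add: term_comp_def atLeast0AtMost atLeastLessThanSuc_atLeastAtMost del: upt_Suc)

lemma op_comp_singleton_Cons: "op_comp [s] (t # Q) = term_comp s t @ op_comp [s] Q"
  by (simp add: op_comp_def)

lemma op_comp_Cons_singleton: "op_comp (s # P) [t] = term_comp s t @ op_comp P [t]"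
  by (simp add: op_comp_def)

definition smooth_coeffs :: "hop \<Rightarrow> bool" where
  "smooth_coeffs P \<longleftrightarrow> (\<forall>(y, m, d)\<in>set P. smooth y)"

lemma smooth_coeffs_simps [simp]:
  "smooth_coeffs []"
  "smooth_coeffs ((a, m, d) # P) \<longleftrightarrow> smooth a \<and> smooth_coeffs P"
  by (auto simp: smooth_coeffs_def)

lemma smooth_coeffs_op_comp:
  assumes "smooth_coeffs P" and "smooth_coeffs Q"
  shows "smooth_coeffs (op_comp P Q)"
  using assms
  by (fastforce simp: smooth_coeffs_def set_op_comp set_term_comp
      intro!: smooth_mult smooth_const smooth_higher_deriv)

lemma smooth_coeffs_comm:
  assumes "smooth_coeffs P" and "smooth_coeffs Q"
  shows "smooth_coeffs (comm P Q)"
  using smooth_coeffs_op_comp[OF assms] smooth_coeffs_op_comp[OF assms(2,1)]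
  by (fastforce simp: comm_def smooth_coeffs_def op_neg_def intro: smooth_neg)

lemma smooth_hcoeff: "smooth_coeffs P \<Longrightarrow> smooth (hcoeff P m d)"
proof (induction P)
  case Nil
  then show ?case by (simp add: smooth_const)
next
  case (Cons t P)
  obtain a m' d' where "t = (a, m', d')"
    by (cases t)
  with Cons show ?case
    by (cases "m' = m \<and> d' = d") (auto simp: hcoeff_Cons smooth_const intro!: smooth_add)
qed

lemma hcoeff_monomial_comp:
  assumes "smooth_coeffs Q"
  shows "hcoeff (op_comp [(a, m1, d1)] Q) m d x =
    (\<Sum>j\<le>d1. if d1 \<le> d + j
      then of_nat (d1 choose j) * a x * (deriv ^^ j) (hcoeff Q (m - m1) (d + j - d1)) x else 0)"
  using assms
proof (induction Q)
  case Nil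
  then show ?case by (simp add: op_comp_def cong: if_cong)
next
  case (Cons t Q)
  obtain b m2 d2 where t: "t = (b, m2, d2)"
    by (cases t)
  have b: "smooth b" and Q: "smooth_coeffs Q"
    using Cons.prems t by auto
  have deriv_hcoeff_Cons: "(deriv ^^ j) (hcoeff (t # Q) m' e) x =
      (if m2 = m' \<and> d2 = e then (deriv ^^ j) b x else 0) + (deriv ^^ j) (hcoeff Q m' e) x" for j m' e
  proof (cases "m2 = m' \<and> d2 = e")
    case True
    then show ?thesis
      using b smooth_hcoeff[OF Q] by (simp add: t hcoeff_Cons higher_deriv_add_smooth)
  next
    case False
    then have "hcoeff (t # Q) m' e = hcoeff Q m' e"
      by (auto simp: t hcoeff_Cons)
    with False show ?thesis
      by auto
  qed
  have "hcoeff (op_comp [(a, m1, d1)] (t # Q)) m d x =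
      hcoeff (term_comp (a, m1, d1) t) m d x + hcoeff (op_comp [(a, m1, d1)] Q) m d x"
    by (simp add: op_comp_singleton_Cons hcoeff_append)
  also have "\<dots> = (\<Sum>j\<le>d1.
      (if m1 + m2 = m \<and> d1 - j + d2 = d then of_nat (d1 choose j) * a x * (deriv ^^ j) b x else 0) +
      (if d1 \<le> d + j
       then of_nat (d1 choose j) * a x * (deriv ^^ j) (hcoeff Q (m - m1) (d + j - d1)) x else 0))"
    by (simp add: t hcoeff_term_comp Cons.IH[OF Q] sum.distrib)
  also have "\<dots> = (\<Sum>j\<le>d1. if d1 \<le> d + j
      then of_nat (d1 choose j) * a x * (deriv ^^ j) (hcoeff (t # Q) (m - m1) (d + j - d1)) x else 0)"
    by (rule sum.cong) (auto simp: deriv_hcoeff_Cons algebra_simps)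
  finally show ?case .
qed

lemma hcoeff_comp_monomial:
  assumes "\<forall>(y, m', e)\<in>set P. e < N"
  shows "hcoeff (op_comp P [(b, m2, d2)]) m d x =
    (\<Sum>e<N. \<Sum>j\<le>e. if e - j + d2 = d
      then of_nat (e choose j) * hcoeff P (m - m2) e x * (deriv ^^ j) b x else 0)"
  using assms
proof (induction P)
  case Nil
  then show ?case by (simp add: op_comp_def cong: if_cong)
next
  case (Cons s P)
  obtain a m1 d1 where s: "s = (a, m1, d1)"
    by (cases s)
  have "d1 < N" and IH: "hcoeff (op_comp P [(b, m2, d2)]) m d x =
      (\<Sum>e<N. \<Sum>j\<le>e. if e - j + d2 = d
        then of_nat (e choose j) * hcoeff P (m - m2) e x * (deriv ^^ j) b x else 0)"
    using Cons s by auto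
  define G where "G e = (\<Sum>j\<le>e. if e - j + d2 = d
      then of_nat (e choose j) * (if m1 = m - m2 then a x else 0) * (deriv ^^ j) b x else 0)" for e
  have "hcoeff (op_comp (s # P) [(b, m2, d2)]) m d x =
      hcoeff (term_comp s (b, m2, d2)) m d x + hcoeff (op_comp P [(b, m2, d2)]) m d x"
    by (simp add: op_comp_Cons_singleton hcoeff_append)
  also have "hcoeff (term_comp s (b, m2, d2)) m d x = G d1"
    unfolding s hcoeff_term_comp G_def by (rule sum.cong) auto
  also have "G d1 = (\<Sum>e<N. if d1 = e then G e else 0)"
    using \<open>d1 < N\<close> by simp
  also have "\<dots> + hcoeff (op_comp P [(b, m2, d2)]) m d x =
      (\<Sum>e<N. \<Sum>j\<le>e. if e - j + d2 = d
        then of_nat (e choose j) * hcoeff (s # P) (m - m2) e x * (deriv ^^ j) b x else 0)"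
    unfolding IH s hcoeff_Cons G_def sum.distrib[symmetric]
    by (intro sum.cong refl) (auto simp: sum.distrib[symmetric] algebra_simps intro!: sum.cong)
  finally show ?case .
qed

lemma hcoeff_monomial_comp_top:
  assumes "smooth_coeffs Q" and high: "\<forall>e. d < e + p \<longrightarrow> hcoeff Q k e = (\<lambda>x. 0)"
  shows "hcoeff (op_comp [(a, m, p)] Q) (m + k) d x = (if p \<le> d then a x * hcoeff Q k (d - p) x else 0)"
proof -
  let ?term = "\<lambda>j. if p \<le> d + j
    then of_nat (p choose j) * a x * (deriv ^^ j) (hcoeff Q k (d + j - p)) x else 0"
  have "hcoeff (op_comp [(a, m, p)] Q) (m + k) d x = (\<Sum>j\<le>p. ?term j)"
    using hcoeff_monomial_comp[OF assms(1), of a m p "m + k" d x] by (simp only: add_diff_cancel_left')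
  also have "\<dots> = ?term 0 + (\<Sum>j<p. ?term (Suc j))"
    by (rule sum.atMost_shift)
  also have "(\<Sum>j<p. ?term (Suc j)) = 0"
    using high by (intro sum.neutral ballI) (simp del: funpow.simps)
  finally show ?thesis
    by simp
qed

lemma hcoeff_comp_monomial_top:
  assumes high: "\<forall>e. d < e + p \<longrightarrow> hcoeff P k e = (\<lambda>x. 0)"
  shows "hcoeff (op_comp P [(b, m, p)]) (k + m) d x = (if p \<le> d then hcoeff P k (d - p) x * b x else 0)"
proof -
  define N where "N = Suc (Max (insert d ((\<lambda>(y, m', e). e) ` set P)))"
  have "e < N" if "(y, m', e) \<in> set P" for y m' e
    unfolding N_def less_Suc_eq_le using that by (auto intro!: Max_ge rev_image_eqI)
  then have N: "\<forall>(y, m', e)\<in>set P. e < N"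
    by blast
  have "d < N"
    unfolding N_def by (simp add: less_Suc_eq_le)
  let ?term = "\<lambda>e j. if e - j + p = d
    then of_nat (e choose j) * hcoeff P k e x * (deriv ^^ j) b x else 0"
  have inner: "(\<Sum>j\<le>e. ?term e j) = (if e + p = d then hcoeff P k e x * b x else 0)" for e
  proof -
    have "(\<Sum>j<e. ?term e (Suc j)) = 0"
      using high by (intro sum.neutral ballI) (auto simp del: funpow.simps)
    then show ?thesis
      by (simp add: sum.atMost_shift)
  qed
  have "hcoeff (op_comp P [(b, m, p)]) (k + m) d x = (\<Sum>e<N. \<Sum>j\<le>e. ?term e j)"
    using hcoeff_comp_monomial[OF N, of b m p "k + m" d x] by (simp only: add_diff_cancel_right')
  also have "\<dots> = (\<Sum>e<N. if e + p = d then hcoeff P k e x * b x else 0)"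
    by (simp only: inner)
  also have "\<dots> = (if p \<le> d then hcoeff P k (d - p) x * b x else 0)"
  proof (cases "p \<le> d")
    case True
    then have "(e + p = d) = (e = d - p)" for e
      by auto
    with True \<open>d < N\<close> show ?thesis
      by simp
  qed simp
  finally show ?thesis .
qed

section \<open>Homogeneity and differential order\<close>

definition h_homogeneous :: "int \<Rightarrow> hop \<Rightarrow> bool" where
  "h_homogeneous k P \<longleftrightarrow> (\<forall>(y, m, d)\<in>set P. m = k)"

lemma h_homogeneous_op_comp:
  "h_homogeneous k P \<Longrightarrow> h_homogeneous l Q \<Longrightarrow> h_homogeneous (k + l) (op_comp P Q)"
  by (fastforce simp: h_homogeneous_def set_op_comp set_term_comp)

lemma h_homogeneous_comm:
  assumes "h_homogeneous k P" and "h_homogeneous l Q"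
  shows "h_homogeneous (k + l) (comm P Q)"
  using h_homogeneous_op_comp[OF assms] h_homogeneous_op_comp[OF assms(2,1)]
  by (fastforce simp: comm_def h_homogeneous_def op_neg_def add.commute)

lemma hcoeff_h_homogeneous: "h_homogeneous k P \<Longrightarrow> m \<noteq> k \<Longrightarrow> hcoeff P m d = (\<lambda>x. 0)"
proof (induction P)
  case (Cons t P)
  then show ?case by (cases t) (auto simp: h_homogeneous_def hcoeff_Cons)
qed simp

definition order_le :: "hop \<Rightarrow> int \<Rightarrow> int \<Rightarrow> bool" where
  "order_le P k r \<longleftrightarrow> (\<forall>d. r < int d \<longrightarrow> hcoeff P k d = (\<lambda>x. 0))"

lemma order_le_monomial: "order_le [(a, m, p)] m (int p)"
  by (auto simp: order_le_def hcoeff_Cons)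

lemma order_le_comm_monomial:
  assumes "smooth_coeffs P" and "order_le P k r"
  shows "order_le (comm [(a, m, p)] P) (m + k) (int p + r - 1)"
  unfolding order_le_def
proof (intro allI impI ext)
  fix d x
  assume "int p + r - 1 < int d"
  then have high: "\<forall>e. d < e + p \<longrightarrow> hcoeff P k e = (\<lambda>x. 0)"
    using assms(2) by (auto simp: order_le_def)
  \<comment> \<open>Only the underived products a c and c a reach order p + r, and they cancel.\<close>
  show "hcoeff (comm [(a, m, p)] P) (m + k) d x = 0"
    using hcoeff_monomial_comp_top[OF assms(1) high, of a m x]
      hcoeff_comp_monomial_top[OF high, of a m x]
    by (simp add: hcoeff_comm add.commute)
qed

lemma order_le_comm_swap: "order_le (comm P Q) k r \<Longrightarrow> order_le (comm Q P) k r"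
  unfolding order_le_def by (metis (no_types) hcoeff_comm minus_diff_eq neg_equal_0_iff_equal)

lemma gen_monomial:
  assumes "smooth V"
  obtains a m p where "gen V b = [(a, m, p)]" and "smooth a" and "int p = m + 1"
  using assms by (cases b) (auto simp: gen_def smooth_const)

lemma nested_invariant:
  assumes "smooth V" and "bs \<noteq> []"
  shows "\<exists>k. smooth_coeffs (nested V bs) \<and> h_homogeneous k (nested V bs) \<and>
    order_le (nested V bs) k (k + 1)"
  using assms(2)
proof (induction bs rule: induct_list012)
  case (2 b)
  obtain a m p where "gen V b = [(a, m, p)]" "smooth a" "int p = m + 1"
    using gen_monomial[OF assms(1), where b = b] .
  then show ?case
    using order_le_monomial[of a m p] by (auto simp: h_homogeneous_def)
next
  case (3 b v vs)
  then obtain k where C: "smooth_coeffs (nested V (v # vs))" "h_homogeneous k (nested V (v # vs))"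
      "order_le (nested V (v # vs)) k (k + 1)"
    by auto
  obtain a m p where g: "gen V b = [(a, m, p)]" "smooth a" "int p = m + 1"
    using gen_monomial[OF assms(1), where b = b] .
  have "h_homogeneous m (gen V b)"
    using g by (simp add: h_homogeneous_def)
  then have "h_homogeneous (m + k) (nested V (b # v # vs))"
    using h_homogeneous_comm[OF _ C(2)] by simp
  moreover have "smooth_coeffs (nested V (b # v # vs))"
    using smooth_coeffs_comm C(1) g by simp
  moreover have "order_le (nested V (b # v # vs)) (m + k) (m + k + 1)"
    using order_le_comm_monomial[OF C(1,3), of a m p] g by (simp add: algebra_simps)
  ultimately show ?case
    by blast
qed simp

lemma appears_order_le:
  assumes "h_homogeneous k P" and "order_le P k r" and "appears P m d"
  shows "m = k \<and> int d \<le> r"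
proof
  show "m = k"
    using assms(3) hcoeff_h_homogeneous[OF assms(1)] by (auto simp: appears_def)
  then show "int d \<le> r"
    using assms(2,3) by (auto simp: appears_def order_le_def not_le[symmetric])
qed

lemma ht_le_wd:
  assumes "h_homogeneous k P" and "order_le P k k"
  shows "ereal (real (ht P)) \<le> wd P"
proof (cases "\<exists>m d. appears P m d")
  case True
  then obtain m0 d0 where "appears P m0 d0"
    by blast
  note bounds = appears_order_le[OF assms]
  have "{m. \<exists>d. appears P m d} = {k}"
    using bounds \<open>appears P m0 d0\<close> by auto
  then have "wd P = ereal (of_int k)"
    using True by (simp add: wd_def)
  have "{d. \<exists>m. appears P m d} \<subseteq> {..nat k}"
    using bounds by force
  then have "ht P \<le> nat k"
    using True unfolding ht_def by (auto intro!: Max.boundedI intro: finite_subset)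
  moreover have "0 \<le> k"
    using bounds[OF \<open>appears P m0 d0\<close>] by linarith
  ultimately have "int (ht P) \<le> k"
    by (simp add: le_nat_iff)
  then show ?thesis
    using \<open>wd P = ereal (of_int k)\<close> by simp
qed (simp add: wd_def)

theorem lemma4p2:
  fixes V y :: "real \<Rightarrow> real" and bs :: "bool list" and q :: nat
  assumes "smooth V" and "smooth y" and "bs \<noteq> []"
  shows "ereal (real (ht (comm (nested V bs) (obs y q)))) \<le> wd (comm (nested V bs) (obs y q))"
proof -
  obtain k where C: "smooth_coeffs (nested V bs)" "h_homogeneous k (nested V bs)"
      "order_le (nested V bs) k (k + 1)"
    using nested_invariant[OF assms(1,3)] by blast
  have "h_homogeneous (int q) (obs y q)"
    by (simp add: obs_def h_homogeneous_def)
  then have "h_homogeneous (k + int q) (comm (nested V bs) (obs y q))"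
    by (rule h_homogeneous_comm[OF C(2)])
  moreover have "order_le (comm (nested V bs) (obs y q)) (k + int q) (k + int q)"
    using order_le_comm_swap[OF order_le_comm_monomial[OF C(1,3), of y "int q" q]]
    by (simp add: obs_def algebra_simps)
  ultimately show ?thesis
    by (rule ht_le_wd)
qed

end
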